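(* No deterministic strategyproof mechanism for locating an obnoxious facility on $[0,1]$ has a bounded approximation ratio for the geometric mean of utilities: for every deterministic strategyproof mechanism $f$ there exist a number of agents $n$ and a profile $\mathbf x\in[0,1]^n$ with $\big(\prod_i|x_i-f(\mathbf x)|\big)^{1/n}=0$ while $\max_{z\in[0,1]}\big(\prod_i|x_i-z|\big)^{1/n}>0$.
   Context: Agents $i=1,\dots,n$ have private locations $x_i\in[0,1]$; a deterministic mechanism $f:[0,1]^n\to[0,1]$ outputs the facility location; utility $u(x_i,y)=|x_i-y|$. $f$ is strategyproof if for all $\mathbf x$, $i$, $x_i'$: $|x_i-f(\mathbf x)|\ge|x_i-f(x_i',\mathbf x_{-i})|$. The geometric-mean objective of $y$ is $\big(\prod_{i}|x_i-y|\big)^{1/n}$ (the limit $p\to0^+$ of the normalized power mean $(\frac1n\sum_i|x_i-y|^p)^{1/p}$), to be maximized. *)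

theory Defs
  imports Complex_Main
begin

definition profile :: "real list \<Rightarrow> bool" where
  "profile xs \<longleftrightarrow> set xs \<subseteq> {0..1}"

definition mechanism :: "(real list \<Rightarrow> real) \<Rightarrow> bool" where
  "mechanism f \<longleftrightarrow> (\<forall>xs. profile xs \<longrightarrow> f xs \<in> {0..1})"

definition strategyproof :: "(real list \<Rightarrow> real) \<Rightarrow> bool" where
  "strategyproof f \<longleftrightarrow>
     (\<forall>xs i x'. profile xs \<longrightarrow> i < length xs \<longrightarrow> x' \<in> {0..1} \<longrightarrow>
        \<bar>xs ! i - f xs\<bar> \<ge> \<bar>xs ! i - f (xs[i := x'])\<bar>)"

definition gm :: "real list \<Rightarrow> real \<Rightarrow> real" where
  "gm xs y = root (length xs) (\<Prod>i<length xs. \<bar>xs ! i - y\<bar>)"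

end

theory Submission
  imports Defs
begin

text \<open>It suffices to consider two agents and to show that some strategyproof mechanism
  places the facility on an agent: then the geometric mean there is 0, while any point of
  [0,1] away from both agents has positive geometric mean.
  Fixing one agent's report turns f into a strategyproof rule g for a single agent, and such
  a rule takes only the two values g 1 \<le> g 0, switching at their midpoint (an agent to the
  left of it prefers g 0, which it gets by reporting 0). If g 1 = g 0 the rule is constant and
  hits the agent located at that constant; so if f never hits an agent, every row and column
  of the square of two-agent profiles is a strict two-valued step function. Comparing the
  four corner values P = f[0,0], Q = f[1,0], R = f[0,1], S = f[1,1] then yields a profile
  at which the row rule gives P and the column rule gives S < P.\<close>

locale single_agent_sp =
  fixes g :: "real \<Rightarrow> real"
  assumes maps_to: "x \<in> {0..1} \<Longrightarrow> g x \<in> {0..1}"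
    and no_gain: "x \<in> {0..1} \<Longrightarrow> x' \<in> {0..1} \<Longrightarrow> \<bar>x - g x'\<bar> \<le> \<bar>x - g x\<bar>"
begin

lemma between_extremes:
  assumes "x \<in> {0..1}"
  shows "g 1 \<le> g x" and "g x \<le> g 0"
proof -
  have "\<bar>0 - g x\<bar> \<le> \<bar>0 - g 0\<bar>" and "\<bar>1 - g x\<bar> \<le> \<bar>1 - g 1\<bar>"
    using no_gain[of 0 x] no_gain[of 1 x] assms by simp_all
  moreover have "g x \<in> {0..1}" "g 0 \<in> {0..1}" "g 1 \<in> {0..1}"
    using maps_to assms by auto
  ultimately show "g 1 \<le> g x" and "g x \<le> g 0" by auto
qed

lemma left_of_midpoint:
  assumes "x \<in> {0..1}" and "x < (g 0 + g 1) / 2"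
  shows "g x = g 0"
proof -
  have "\<bar>x - g 0\<bar> \<le> \<bar>x - g x\<bar>" using no_gain assms(1) by simp
  with between_extremes[OF assms(1)] assms(2) show ?thesis by (auto simp: abs_if split: if_splits)
qed

lemma right_of_midpoint:
  assumes "x \<in> {0..1}" and "x > (g 0 + g 1) / 2"
  shows "g x = g 1"
proof -
  have "\<bar>x - g 1\<bar> \<le> \<bar>x - g x\<bar>" using no_gain assms(1) by simp
  with between_extremes[OF assms(1)] assms(2) show ?thesis by (auto simp: abs_if split: if_splits)
qed

lemma strict_without_fixed_point:
  assumes "\<And>x. x \<in> {0..1} \<Longrightarrow> g x \<noteq> x"
  shows "g 1 < g 0"
proof (rule ccontr)
  assume "\<not> g 1 < g 0"
  then have "g 1 = g 0" using between_extremes(2)[of 1] by simp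
  moreover have c: "g 0 \<in> {0..1}" using maps_to by simp
  ultimately have "g (g 0) = g 0" using between_extremes[OF c] by simp
  with assms c show False by blast
qed

end

lemma sp_square_hits_agent:
  fixes F :: "real \<Rightarrow> real \<Rightarrow> real"
  assumes rows: "\<And>y. y \<in> {0..1} \<Longrightarrow> single_agent_sp (\<lambda>x. F x y)"
    and cols: "\<And>x. x \<in> {0..1} \<Longrightarrow> single_agent_sp (F x)"
  shows "\<exists>x\<in>{0..1}. \<exists>y\<in>{0..1}. F x y = x \<or> F x y = y"
proof (rule ccontr)
  assume "\<not> ?thesis"
  then have row_strict: "F 1 y < F 0 y" and col_strict: "F y 1 < F y 0"
    if "y \<in> {0..1}" for y
    using single_agent_sp.strict_without_fixed_point[OF rows[OF that]]
      single_agent_sp.strict_without_fixed_point[OF cols[OF that]] that by auto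
  define P Q R S where "P = F 0 0" and "Q = F 1 0" and "R = F 0 1" and "S = F 1 1"
  have order: "Q < P" "S < R" "R < P" "S < Q"
    using row_strict[of 0] row_strict[of 1] col_strict[of 0] col_strict[of 1]
    by (simp_all add: P_def Q_def R_def S_def)
  have corners: "P \<in> {0..1}" "R \<in> {0..1}" "S \<in> {0..1}"
    using single_agent_sp.maps_to[OF rows, of 0 0] single_agent_sp.maps_to[OF rows, of 1 1]
      single_agent_sp.maps_to[OF rows, of 1 0]
    by (simp_all add: P_def Q_def R_def S_def)
  \<comment> \<open>Column x and row y both run from P to S, so both switch at (P + S) / 2, which lies
    strictly between x and y.\<close>
  define x y where "x = (P + R + 2 * S) / 4" and "y = (2 * P + R + S) / 4"
  have xy: "x \<in> {0..1}" "y \<in> {0..1}"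
    using corners by (auto simp: x_def y_def)
  have "F x 0 = P" "F x 1 = S"
    using single_agent_sp.left_of_midpoint[OF rows, of 0 x]
      single_agent_sp.right_of_midpoint[OF rows, of 1 x] xy order
    by (simp_all add: P_def Q_def R_def S_def x_def y_def)
  then have "F x y = S"
    using single_agent_sp.right_of_midpoint[OF cols, of x y] xy order by (simp add: x_def y_def)
  have "F 0 y = P" "F 1 y = S"
    using single_agent_sp.left_of_midpoint[OF cols, of 0 y]
      single_agent_sp.right_of_midpoint[OF cols, of 1 y] xy order
    by (simp_all add: P_def Q_def R_def S_def x_def y_def)
  then have "F x y = P"
    using single_agent_sp.left_of_midpoint[OF rows, of y x] xy order by (simp add: x_def y_def)
  with \<open>F x y = S\<close> order show False by simp
qed

lemma strategyproof_two_agents: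
  assumes "mechanism f" and "strategyproof f"
  shows "y \<in> {0..1} \<Longrightarrow> single_agent_sp (\<lambda>x. f [x, y])"
    and "x \<in> {0..1} \<Longrightarrow> single_agent_sp (\<lambda>y. f [x, y])"
proof -
  have range: "f [x, y] \<in> {0..1}" if "x \<in> {0..1}" "y \<in> {0..1}" for x y
    using assms(1) that by (simp add: mechanism_def profile_def)
  show "single_agent_sp (\<lambda>x. f [x, y])" if y: "y \<in> {0..1}"
  proof
    show "f [x, y] \<in> {0..1}" if "x \<in> {0..1}" for x
      using range that y .
    show "\<bar>x - f [x', y]\<bar> \<le> \<bar>x - f [x, y]\<bar>" if "x \<in> {0..1}" "x' \<in> {0..1}" for x x'
      using assms(2)[unfolded strategyproof_def, rule_format, of "[x, y]" 0 x'] that y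
      by (simp add: profile_def)
  qed
  show "single_agent_sp (\<lambda>y. f [x, y])" if x: "x \<in> {0..1}"
  proof
    show "f [x, y] \<in> {0..1}" if "y \<in> {0..1}" for y
      using range x that .
    show "\<bar>y - f [x, y']\<bar> \<le> \<bar>y - f [x, y]\<bar>" if "y \<in> {0..1}" "y' \<in> {0..1}" for y y'
      using assms(2)[unfolded strategyproof_def, rule_format, of "[x, y]" 1 y'] that x
      by (simp add: profile_def)
  qed
qed

lemma gm_eq_0_iff:
  assumes "xs \<noteq> []"
  shows "gm xs y = 0 \<longleftrightarrow> y \<in> set xs"
  using assms by (auto simp: gm_def in_set_conv_nth)

lemma gm_nonneg: "gm xs y \<ge> 0"
  by (simp add: gm_def real_root_ge_zero prod_nonneg)

lemma gm_le_1:
  assumes "profile xs" and "y \<in> {0..1}"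
  shows "gm xs y \<le> 1"
proof (cases "xs = []")
  case False
  have "\<bar>xs ! i - y\<bar> \<le> 1" if "i < length xs" for i
  proof -
    have "xs ! i \<in> {0..1}" using assms(1) nth_mem[OF that] by (auto simp: profile_def)
    with assms(2) show ?thesis by auto
  qed
  with False show ?thesis by (auto simp: gm_def intro!: prod_le_1)
qed (simp add: gm_def)

lemma SUP_gm_pos:
  assumes "profile xs" and "xs \<noteq> []"
  shows "(SUP z\<in>{0..1}. gm xs z) > 0"
proof -
  have "infinite ({0..1::real} - set xs)"
    using Diff_infinite_finite[of "set xs" "{0..1::real}"] by simp
  then obtain z where z: "z \<in> {0..1}" "z \<notin> set xs"
    using infinite_imp_nonempty by blast
  have "0 < gm xs z"
    using gm_eq_0_iff[OF assms(2)] gm_nonneg[of xs z] z(2) by fastforce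
  also have "gm xs z \<le> (SUP z\<in>{0..1}. gm xs z)"
    using z(1) gm_le_1[OF assms(1)] by (intro cSUP_upper bdd_aboveI2) auto
  finally show ?thesis .
qed

theorem theorem7:
  fixes f :: "real list \<Rightarrow> real"
  assumes "mechanism f" and "strategyproof f"
  shows "\<exists>xs. xs \<noteq> [] \<and> profile xs \<and> gm xs (f xs) = 0 \<and> (SUP z\<in>{0..1}. gm xs z) > 0"
proof -
  obtain x y where xy: "x \<in> {0..1}" "y \<in> {0..1}" and hit: "f [x, y] = x \<or> f [x, y] = y"
    using sp_square_hits_agent[of "\<lambda>x y. f [x, y]"] strategyproof_two_agents[OF assms]
    by blast
  have "profile [x, y]" using xy by (simp add: profile_def)
  moreover have "gm [x, y] (f [x, y]) = 0" using hit gm_eq_0_iff[of "[x, y]"] by auto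
  ultimately show ?thesis using SUP_gm_pos[of "[x, y]"] by blast
qed

end
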